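(* Under the assumptions $\max_{i,j}|A_{ij}|\le1$ and $|\xi^{(t)}|\le1$ for all $t$, let $p^{(T)}=\frac1T\sum_{t=1}^{T}e^{(i^{(t)})}$ be the empirical distribution of the arms chosen by the Influential LCB algorithm in rounds $1,\dots,T$, and let $\mathcal L_2(p)=\frac12p^\top Ap$. Then for every $T\ge K+1$, $$\mathcal L_2(p^{(T)})-\min_{p\in\Delta_K}\mathcal L_2(p)\;\le\;\frac{5K+1}{2T}+\big(2K+2\|l^{(1)}\|_\infty+4\big)\frac{\log T}{T},$$ where $\Delta_K=\{p\in\mathbb{R}^K: p\ge0,\ \sum_ip_i=1\}$.
   Context: Influential bandit problem: $K$ arms, symmetric positive semi-definite $A\in\mathbb{R}^{K\times K}$, initial loss vector $l^{(1)}\in\mathbb{R}^K$; at round $t$ the algorithm chooses $i^{(t)}$, observes $L^{(t)}=l^{(t)}_{i^{(t)}}+\xi^{(t)}$, and $l^{(t+1)}_j=l^{(t)}_j+A_{i^{(t)}j}$ for all $j$. Influential LCB algorithm: initialize $c^{(1)}_i=0$, $\hat l^{(1)}_i=-\infty$; at round $t$ choose $i^{(t)}\in\arg\min_i(\hat l^{(t)}_i-c^{(t)}_i)$, then set $\hat l^{(t+1)}_{i^{(t)}}=L^{(t)}$, $\hat l^{(t+1)}_i=\hat l^{(t)}_i$ otherwise, and $c^{(t+1)}_{i^{(t)}}=1$, $c^{(t+1)}_i=c^{(t)}_i+1$ otherwise. $e^{(i)}$ is the $i$-th standard basis vector; $\log$ is the natural logarithm. *)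

theory Defs
  imports "HOL-Analysis.Analysis"
begin

text \<open>Arms are indexed by natural numbers i < K. Rounds are numbered t = 1, 2, ...
  The choice sequence ch t is the arm chosen in round t. The states below are indexed
  by n = t - 1, i.e. the value at index n is the quantity with superscript (n+1)
  in the paper.\<close>

primrec loss_vec :: "(nat \<Rightarrow> nat \<Rightarrow> real) \<Rightarrow> (nat \<Rightarrow> real) \<Rightarrow> (nat \<Rightarrow> nat) \<Rightarrow> nat \<Rightarrow> nat \<Rightarrow> real" where
  "loss_vec A l1 ch 0 j = l1 j"
| "loss_vec A l1 ch (Suc n) j = loss_vec A l1 ch n j + A (ch (Suc n)) j"

definition obs :: "(nat \<Rightarrow> nat \<Rightarrow> real) \<Rightarrow> (nat \<Rightarrow> real) \<Rightarrow> (nat \<Rightarrow> real) \<Rightarrow> (nat \<Rightarrow> nat) \<Rightarrow> nat \<Rightarrow> real" where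
  "obs A l1 \<xi> ch t = loss_vec A l1 ch (t - 1) (ch t) + \<xi> t"

primrec lhat :: "(nat \<Rightarrow> nat \<Rightarrow> real) \<Rightarrow> (nat \<Rightarrow> real) \<Rightarrow> (nat \<Rightarrow> real) \<Rightarrow> (nat \<Rightarrow> nat) \<Rightarrow> nat \<Rightarrow> nat \<Rightarrow> ereal" where
  "lhat A l1 \<xi> ch 0 i = -\<infinity>"
| "lhat A l1 \<xi> ch (Suc n) i =
     (if ch (Suc n) = i then ereal (obs A l1 \<xi> ch (Suc n)) else lhat A l1 \<xi> ch n i)"

primrec cnt :: "(nat \<Rightarrow> nat) \<Rightarrow> nat \<Rightarrow> nat \<Rightarrow> nat" where
  "cnt ch 0 i = 0"
| "cnt ch (Suc n) i = (if ch (Suc n) = i then 1 else cnt ch n i + 1)"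

definition influential_lcb_run ::
  "nat \<Rightarrow> (nat \<Rightarrow> nat \<Rightarrow> real) \<Rightarrow> (nat \<Rightarrow> real) \<Rightarrow> (nat \<Rightarrow> real) \<Rightarrow> (nat \<Rightarrow> nat) \<Rightarrow> bool" where
  "influential_lcb_run K A l1 \<xi> ch \<longleftrightarrow>
     (\<forall>t\<ge>1. ch t < K \<and>
        (\<forall>i<K. lhat A l1 \<xi> ch (t - 1) (ch t) - ereal (real (cnt ch (t - 1) (ch t)))
               \<le> lhat A l1 \<xi> ch (t - 1) i - ereal (real (cnt ch (t - 1) i))))"

definition emp_dist :: "(nat \<Rightarrow> nat) \<Rightarrow> nat \<Rightarrow> nat \<Rightarrow> real" where
  "emp_dist ch T i = real (card {t \<in> {1..T}. ch t = i}) / real T"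

definition L2 :: "nat \<Rightarrow> (nat \<Rightarrow> nat \<Rightarrow> real) \<Rightarrow> (nat \<Rightarrow> real) \<Rightarrow> real" where
  "L2 K A p = (1/2) * (\<Sum>i<K. \<Sum>j<K. p i * A i j * p j)"

definition prob_simplex :: "nat \<Rightarrow> (nat \<Rightarrow> real) set" where
  "prob_simplex K = {p. (\<forall>i<K. p i \<ge> 0) \<and> (\<Sum>i<K. p i) = 1 \<and> (\<forall>i\<ge>K. p i = 0)}"

definition sup_norm :: "nat \<Rightarrow> (nat \<Rightarrow> real) \<Rightarrow> real" where
  "sup_norm K v = Max ((\<lambda>i. \<bar>v i\<bar>) ` {..<K})"

end

theory Submission
  imports Defs
begin

text \<open>Let N_n be the vector of play counts after n rounds, Q(x) = x^T A x and
  G_q(n) = Q(N_n)/(2n) - n Q(q)/2, so that G_q(T)/T = L2(p^(T)) - L2(q). Once every arm has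
  been played (n \<ge> K), the LCB rule picks an arm j whose coordinate (A N_n)_j is minimal up to
  2 + 2 |l^(1)|_inf + 2c, where c is the number of rounds since j was last played. Averaging
  over q and using 2n q^T A N_n \<le> n^2 Q(q) + Q(N_n) (positive semidefiniteness) gives
  G_q(n+1) \<le> G_q(n) + (2 |l^(1)|_inf + 5/2 + 2c)/(n+1). The terms c/(n+1) are paid for by the
  potential sum_j ln(s_j - 1), where s_j is the last round in which arm j was played: playing j
  in round n+1 raises its term from ln(n - c) to ln n \<ge> ln(n - c) + c/n, and the potential
  never exceeds K ln T.\<close>

subsection \<open>Quadratic forms\<close>

definition bilin :: "nat \<Rightarrow> (nat \<Rightarrow> nat \<Rightarrow> real) \<Rightarrow> (nat \<Rightarrow> real) \<Rightarrow> (nat \<Rightarrow> real) \<Rightarrow> real" where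
  "bilin K A x y = (\<Sum>i<K. \<Sum>j<K. x i * A i j * y j)"

lemma L2_eq_bilin: "L2 K A p = bilin K A p p / 2"
  unfolding L2_def bilin_def by simp

lemma bilin_commute:
  assumes "\<forall>i<K. \<forall>j<K. A i j = A j i"
  shows "bilin K A x y = bilin K A y x"
proof -
  have "bilin K A x y = (\<Sum>j<K. \<Sum>i<K. x i * A i j * y j)"
    unfolding bilin_def by (rule sum.swap)
  also have "\<dots> = bilin K A y x"
    unfolding bilin_def using assms by (intro sum.cong refl) (simp add: mult_ac)
  finally show ?thesis .
qed

lemma bilin_eq_sum_column: "bilin K A x y = (\<Sum>j<K. y j * (\<Sum>i<K. x i * A i j))"
  unfolding bilin_def by (subst sum.swap) (simp add: sum_distrib_left mult_ac)

lemma two_mult_bilin_le: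
  assumes sym: "\<forall>i<K. \<forall>j<K. A i j = A j i" and psd: "\<And>x. 0 \<le> bilin K A x x"
  shows "2 * a * bilin K A x y \<le> a\<^sup>2 * bilin K A x x + bilin K A y y"
proof -
  have "bilin K A (\<lambda>i. a * x i - y i) (\<lambda>i. a * x i - y i)
      = a\<^sup>2 * bilin K A x x - a * bilin K A x y - a * bilin K A y x + bilin K A y y"
    unfolding bilin_def
    by (simp add: algebra_simps power2_eq_square sum.distrib sum_subtractf sum_distrib_left)
  moreover have "bilin K A y x = bilin K A x y"
    by (rule bilin_commute[OF sym])
  ultimately show ?thesis
    using psd[of "\<lambda>i. a * x i - y i"] by (simp add: algebra_simps)
qed

lemma bilin_add_unit:
  assumes sym: "\<forall>i<K. \<forall>j<K. A i j = A j i" and j: "j < K"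
  shows "bilin K A (\<lambda>i. x i + of_bool (i = j)) (\<lambda>i. x i + of_bool (i = j))
    = bilin K A x x + 2 * (\<Sum>i<K. x i * A i j) + A j j"
proof -
  let ?e = "\<lambda>i. of_bool (i = j) :: real"
  have "bilin K A (\<lambda>i. x i + ?e i) (\<lambda>i. x i + ?e i)
      = bilin K A x x + bilin K A x ?e + bilin K A ?e x + bilin K A ?e ?e"
    unfolding bilin_def by (simp add: algebra_simps sum.distrib)
  moreover have "bilin K A x ?e = (\<Sum>i<K. x i * A i j)"
    unfolding bilin_def using j by simp
  moreover have "bilin K A ?e ?e = A j j"
  proof -
    have "bilin K A ?e ?e = (\<Sum>k<K. A j k * ?e k)"
      unfolding bilin_def using j by (simp add: mult.assoc sum_distrib_left[symmetric])
    then show ?thesis using j by simp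
  qed
  moreover have "bilin K A ?e x = bilin K A x ?e"
    by (rule bilin_commute[OF sym])
  ultimately show ?thesis by simp
qed

lemma bilin_le_sum_square:
  assumes "\<forall>i<K. \<forall>j<K. A i j \<le> 1" and "\<forall>i. 0 \<le> x i"
  shows "bilin K A x x \<le> (\<Sum>i<K. x i)\<^sup>2"
proof -
  have "bilin K A x x \<le> (\<Sum>i<K. \<Sum>j<K. x i * x j)"
    unfolding bilin_def
  proof (intro sum_mono)
    fix i j assume "i \<in> {..<K}" "j \<in> {..<K}"
    then have "x i * x j * A i j \<le> x i * x j * 1"
      using assms by (intro mult_left_mono) auto
    then show "x i * A i j * x j \<le> x i * x j" by (simp add: mult_ac)
  qed
  also have "\<dots> = (\<Sum>i<K. x i)\<^sup>2"
    by (simp add: power2_eq_square sum_product)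
  finally show ?thesis .
qed

definition play_count :: "(nat \<Rightarrow> nat) \<Rightarrow> nat \<Rightarrow> nat \<Rightarrow> real" where
  "play_count ch n i = real (card {t \<in> {1..n}. ch t = i})"

lemma play_count_0 [simp]: "play_count ch 0 i = 0"
  unfolding play_count_def by simp

lemma play_count_Suc: "play_count ch (Suc n) i = play_count ch n i + of_bool (i = ch (Suc n))"
proof -
  have "{t \<in> {1..Suc n}. ch t = i}
      = (if i = ch (Suc n) then insert (Suc n) else id) {t \<in> {1..n}. ch t = i}"
    by (auto simp: le_Suc_eq)
  then show ?thesis
    unfolding play_count_def by simp
qed

lemma play_count_nonneg: "0 \<le> play_count ch n i"
  unfolding play_count_def by simp

lemma emp_dist_eq_play_count: "emp_dist ch T = (\<lambda>i. play_count ch T i / real T)"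
  unfolding emp_dist_def play_count_def by simp

lemma sum_play_count:
  assumes "\<And>t. ch (Suc t) < K"
  shows "(\<Sum>i<K. play_count ch n i) = real n"
  by (induction n) (simp_all add: play_count_Suc sum.distrib assms)

lemma loss_vec_eq_play_count:
  assumes "\<And>t. ch (Suc t) < K"
  shows "loss_vec A l1 ch n j = l1 j + (\<Sum>i<K. play_count ch n i * A i j)"
  by (induction n) (simp_all add: play_count_Suc sum.distrib distrib_right assms)

lemma loss_vec_drift:
  assumes "\<And>t. ch (Suc t) < K" and "\<forall>i<K. \<forall>j<K. \<bar>A i j\<bar> \<le> 1" and "m \<le> n" and "j < K"
  shows "\<bar>loss_vec A l1 ch n j - loss_vec A l1 ch m j\<bar> \<le> real (n - m)"
  using \<open>m \<le> n\<close>
proof (induction n rule: dec_induct)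
  case (step n)
  have "\<bar>A (ch (Suc n)) j\<bar> \<le> 1"
    using assms by blast
  with step.IH show ?case
    using step.hyps by (simp add: Suc_diff_le)
qed simp

lemma cnt_le: "cnt ch n i \<le> n"
  by (induction n) auto

lemma cnt_ge_1: "1 \<le> n \<Longrightarrow> 1 \<le> cnt ch n i"
  by (cases n) auto

text \<open>cnt ch n i is the number of rounds since arm i was last played (n if it never was),
  so a finite estimate is the observation made in round n + 1 - cnt ch n i.\<close>

lemma lhat_cases:
  "lhat A l1 \<xi> ch n i = -\<infinity> \<or>
   lhat A l1 \<xi> ch n i = ereal (loss_vec A l1 ch (n - cnt ch n i) i + \<xi> (n - cnt ch n i + 1))"
  by (induction n) (auto simp: obs_def)

lemma abs_le_sup_norm: "i < K \<Longrightarrow> \<bar>v i\<bar> \<le> sup_norm K v"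
  unfolding sup_norm_def by (rule Max_ge) auto

lemma sup_norm_nonneg: "0 < K \<Longrightarrow> 0 \<le> sup_norm K v"
  using abs_le_sup_norm[of 0 K v] by linarith

subsection \<open>A logarithmic potential\<close>

lemma diff_div_le_ln_diff:
  fixes a b :: real
  assumes "0 < a" and "a \<le> b"
  shows "(b - a) / b \<le> ln b - ln a"
proof -
  have "ln (a / b) \<le> a / b - 1"
    using assms by (intro ln_le_minus_one) simp
  moreover have "ln (a / b) = ln a - ln b"
    using assms by (simp add: ln_div)
  moreover have "a / b - 1 = - ((b - a) / b)"
    using assms by (simp add: field_simps)
  ultimately show ?thesis by linarith
qed

definition ln_pred :: "nat \<Rightarrow> real" where
  "ln_pred s = (if 2 \<le> s then ln (real s - 1) else -1)"

lemma ln_pred_ge: "-1 \<le> ln_pred s"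
proof -
  have "2 \<le> s \<Longrightarrow> 0 \<le> ln (real s - 1)"
    by (intro ln_ge_zero) simp
  then show ?thesis
    unfolding ln_pred_def by fastforce
qed

lemma ln_pred_le:
  assumes "s \<le> T + 1" and "1 \<le> T"
  shows "ln_pred s \<le> ln (real T)"
proof -
  have "0 \<le> ln (real T)"
    using assms by simp
  moreover have "2 \<le> s \<Longrightarrow> ln (real s - 1) \<le> ln (real T)"
    using assms by (subst ln_le_cancel_iff) auto
  ultimately show ?thesis
    unfolding ln_pred_def by auto
qed

locale lcb_run =
  fixes K :: nat and A :: "nat \<Rightarrow> nat \<Rightarrow> real" and l1 :: "nat \<Rightarrow> real"
    and \<xi> :: "nat \<Rightarrow> real" and ch :: "nat \<Rightarrow> nat"
  assumes A_bdd: "\<forall>i<K. \<forall>j<K. \<bar>A i j\<bar> \<le> 1"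
    and noise_bdd: "\<forall>t. \<bar>\<xi> t\<bar> \<le> 1"
    and run: "influential_lcb_run K A l1 \<xi> ch"
begin

lemma chosen_less: "ch (Suc n) < K"
  using run unfolding influential_lcb_run_def by auto

lemma K_pos: "0 < K"
  using chosen_less[of 0] by simp

lemma chosen_minimizes:
  "i < K \<Longrightarrow> lhat A l1 \<xi> ch n (ch (Suc n)) - ereal (real (cnt ch n (ch (Suc n))))
     \<le> lhat A l1 \<xi> ch n i - ereal (real (cnt ch n i))"
  using run unfolding influential_lcb_run_def by (metis diff_Suc_1 le_add1 plus_1_eq_Suc)

lemma estimate_bounds:
  assumes "lhat A l1 \<xi> ch n i \<noteq> -\<infinity>" and "i < K"
  obtains x where "lhat A l1 \<xi> ch n i = ereal x"
    and "loss_vec A l1 ch n i - real (cnt ch n i) - 1 \<le> x"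
    and "x \<le> loss_vec A l1 ch n i + real (cnt ch n i) + 1"
proof -
  let ?c = "cnt ch n i"
  have est: "lhat A l1 \<xi> ch n i = ereal (loss_vec A l1 ch (n - ?c) i + \<xi> (n - ?c + 1))"
    using lhat_cases assms(1) by blast
  have "\<bar>loss_vec A l1 ch n i - loss_vec A l1 ch (n - ?c) i\<bar> \<le> real (n - (n - ?c))"
    using A_bdd assms(2) chosen_less by (intro loss_vec_drift) auto
  moreover have "n - (n - ?c) = ?c"
    using cnt_le[of ch n i] by simp
  moreover have "\<bar>\<xi> (n - ?c + 1)\<bar> \<le> 1"
    using noise_bdd by blast
  ultimately show ?thesis
    using that[OF est] by (simp add: abs_le_iff)
qed

definition unplayed :: "nat \<Rightarrow> nat set" where
  "unplayed n = {i. i < K \<and> lhat A l1 \<xi> ch n i = -\<infinity>}"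

text \<open>An unplayed arm has index -\<infinity>, so as long as one exists the minimizing arm is unplayed too.\<close>

lemma card_unplayed_le: "card (unplayed n) \<le> K - n"
proof (induction n)
  case 0
  have "unplayed 0 \<subseteq> {..<K}"
    unfolding unplayed_def by blast
  then show ?case
    using card_mono[of "{..<K}"] by fastforce
next
  case (Suc n)
  let ?j = "ch (Suc n)"
  have step: "unplayed (Suc n) = unplayed n - {?j}"
    unfolding unplayed_def by auto
  show ?case
  proof (cases "unplayed n = {}")
    case True
    then show ?thesis using step by simp
  next
    case False
    then obtain i where i: "i < K" "lhat A l1 \<xi> ch n i = -\<infinity>"
      unfolding unplayed_def by blast
    have "lhat A l1 \<xi> ch n ?j - ereal (real (cnt ch n ?j)) \<le> -\<infinity>"
      using chosen_minimizes[OF i(1), of n] i(2) by simp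
    then have "?j \<in> unplayed n"
      using chosen_less[of n] unfolding unplayed_def by (cases "lhat A l1 \<xi> ch n ?j") auto
    moreover have "finite (unplayed n)"
      unfolding unplayed_def by simp
    ultimately have "card (unplayed (Suc n)) = card (unplayed n) - 1"
      using step by simp
    with Suc.IH show ?thesis by linarith
  qed
qed

lemma all_played: "K \<le> n \<Longrightarrow> i < K \<Longrightarrow> lhat A l1 \<xi> ch n i \<noteq> -\<infinity>"
  using card_unplayed_le[of n] unfolding unplayed_def by (simp add: card_eq_0_iff)

lemma chosen_loss_le:
  assumes "K \<le> n" and "k < K"
  shows "loss_vec A l1 ch n (ch (Suc n)) \<le> loss_vec A l1 ch n k + 2 + 2 * real (cnt ch n (ch (Suc n)))"
proof -
  let ?j = "ch (Suc n)"
  obtain xj where xj: "lhat A l1 \<xi> ch n ?j = ereal xj"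
    "loss_vec A l1 ch n ?j - real (cnt ch n ?j) - 1 \<le> xj"
    using estimate_bounds[OF all_played[OF assms(1) chosen_less] chosen_less] by metis
  obtain xk where xk: "lhat A l1 \<xi> ch n k = ereal xk"
    "xk \<le> loss_vec A l1 ch n k + real (cnt ch n k) + 1"
    using estimate_bounds[OF all_played[OF assms] assms(2)] by metis
  have "xj - real (cnt ch n ?j) \<le> xk - real (cnt ch n k)"
    using chosen_minimizes[OF assms(2), of n] xj(1) xk(1) by simp
  then show ?thesis
    using xj(2) xk(2) by simp
qed

lemma chosen_column_le:
  assumes "K \<le> n" and q0: "\<forall>k<K. 0 \<le> q k" and q1: "(\<Sum>k<K. q k) = 1"
  shows "(\<Sum>i<K. play_count ch n i * A i (ch (Suc n)))
    \<le> bilin K A (play_count ch n) q + 2 * sup_norm K l1 + 2 + 2 * real (cnt ch n (ch (Suc n)))"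
proof -
  let ?j = "ch (Suc n)"
  define col where "col k = (\<Sum>i<K. play_count ch n i * A i k)" for k
  define E where "E = 2 * sup_norm K l1 + 2 + 2 * real (cnt ch n ?j)"
  have col_le: "col ?j \<le> col k + E" if "k < K" for k
  proof -
    have "l1 ?j + col ?j \<le> l1 k + col k + 2 + 2 * real (cnt ch n ?j)"
      using chosen_loss_le[OF assms(1) that]
      by (simp add: loss_vec_eq_play_count[where K = K and ch = ch, OF chosen_less] col_def)
    moreover have "\<bar>l1 ?j\<bar> \<le> sup_norm K l1" "\<bar>l1 k\<bar> \<le> sup_norm K l1"
      using abs_le_sup_norm chosen_less that by auto
    ultimately show ?thesis
      unfolding E_def by linarith
  qed
  have "col ?j = (\<Sum>k<K. q k * col ?j)"
    using q1 by (simp add: sum_distrib_right[symmetric])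
  also have "\<dots> \<le> (\<Sum>k<K. q k * (col k + E))"
    using q0 col_le by (intro sum_mono mult_left_mono) auto
  also have "\<dots> = bilin K A (play_count ch n) q + E"
    using q1 by (simp add: bilin_eq_sum_column col_def distrib_left sum.distrib
        sum_distrib_right[symmetric])
  finally show ?thesis
    unfolding col_def E_def by simp
qed

text \<open>n + 1 - cnt ch n j is the last round up to n in which arm j was played (1 if none).\<close>

definition recency :: "nat \<Rightarrow> real" where
  "recency n = (\<Sum>j<K. ln_pred (n + 1 - cnt ch n j))"

lemma recency_ge: "- real K \<le> recency n"
  using sum_mono[of "{..<K}" "\<lambda>_. -1" "\<lambda>j. ln_pred (n + 1 - cnt ch n j)"]
  unfolding recency_def by (simp add: ln_pred_ge)

lemma recency_le: "1 \<le> n \<Longrightarrow> recency n \<le> real K * ln (real n)"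
  using sum_mono[of "{..<K}" "\<lambda>j. ln_pred (n + 1 - cnt ch n j)" "\<lambda>_. ln (real n)"]
  unfolding recency_def by (simp add: ln_pred_le)

lemma recency_step:
  assumes "1 \<le> n"
  shows "real (cnt ch n (ch (Suc n))) / real (Suc n) \<le> recency (Suc n) - recency n"
proof -
  define j where "j = ch (Suc n)"
  define c where "c = cnt ch n j"
  have j: "j \<in> {..<K}"
    unfolding j_def using chosen_less by simp
  have c: "1 \<le> c" "c \<le> n"
    unfolding c_def using cnt_ge_1[OF assms] cnt_le by auto
  define R where "R = (\<Sum>i\<in>{..<K} - {j}. ln_pred (n + 1 - cnt ch n i))"
  have "recency n = ln_pred (n + 1 - c) + R"
    unfolding recency_def R_def c_def by (rule sum.remove[OF _ j]) simp
  moreover have "recency (Suc n) = ln_pred (n + 1) + R"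
  proof -
    have "recency (Suc n) = ln_pred (Suc n + 1 - cnt ch (Suc n) j)
        + (\<Sum>i\<in>{..<K} - {j}. ln_pred (Suc n + 1 - cnt ch (Suc n) i))"
      unfolding recency_def by (rule sum.remove[OF _ j]) simp
    also have "(\<Sum>i\<in>{..<K} - {j}. ln_pred (Suc n + 1 - cnt ch (Suc n) i)) = R"
      unfolding R_def by (intro sum.cong refl) (auto simp: j_def)
    finally show ?thesis
      by (simp add: j_def)
  qed
  moreover have "real c / real n \<le> ln_pred (n + 1) - ln_pred (n + 1 - c)"
  proof (cases "c = n")
    case True
    then show ?thesis
      using assms by (simp add: ln_pred_def)
  next
    case False
    then have "real c / real n \<le> ln (real n) - ln (real n - real c)"
      using c diff_div_le_ln_diff[of "real n - real c" "real n"] by simp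
    moreover have "2 \<le> n + 1 - c"
      using False c by simp
    ultimately show ?thesis
      using c by (simp add: ln_pred_def of_nat_diff)
  qed
  moreover have "real c / real (Suc n) \<le> real c / real n"
    using assms by (intro divide_left_mono) auto
  ultimately show ?thesis
    unfolding c_def j_def by linarith
qed

end

lemma potential_step_arith:
  fixes n x y z Q e :: real
  assumes n: "0 < n" and y: "0 \<le> y" and z: "2 * n * z \<le> n\<^sup>2 * y + x" and Q: "Q \<le> x + 2 * z + e"
  shows "Q / (2 * (n + 1)) - (n + 1) * y / 2 \<le> x / (2 * n) - n * y / 2 + e / (2 * (n + 1))"
proof -
  have "2 * z \<le> n * y + x / n"
    using z n by (simp add: field_simps power2_eq_square)
  moreover have "(n + 1) * (x / n) = x + x / n"
    using n by (simp add: field_simps)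
  ultimately have "Q \<le> (n + 1) * (x / n) + n * y + e"
    using Q by linarith
  then have "Q / (2 * (n + 1)) \<le> ((n + 1) * (x / n) + n * y + e) / (2 * (n + 1))"
    using n by (simp add: divide_right_mono)
  also have "\<dots> = x / (2 * n) + n * y / (2 * (n + 1)) + e / (2 * (n + 1))"
    using n by (simp add: add_divide_distrib) (simp add: divide_simps)
  also have "n * y / (2 * (n + 1)) \<le> y / 2"
    using n y by (simp add: field_simps)
  finally have "Q / (2 * (n + 1)) \<le> x / (2 * n) + y / 2 + e / (2 * (n + 1))"
    by simp
  moreover have "(n + 1) * y / 2 = n * y / 2 + y / 2"
    by (simp add: field_simps)
  ultimately show ?thesis by linarith
qed

locale psd_lcb_run = lcb_run +
  assumes A_sym: "\<forall>i<K. \<forall>j<K. A i j = A j i"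
    and A_psd: "\<forall>x. 0 \<le> (\<Sum>i<K. \<Sum>j<K. x i * A i j * x j)"
begin

lemma bilin_nonneg: "0 \<le> bilin K A x x"
  using A_psd unfolding bilin_def by blast

definition scaled_gap :: "(nat \<Rightarrow> real) \<Rightarrow> nat \<Rightarrow> real" where
  "scaled_gap q n = bilin K A (play_count ch n) (play_count ch n) / (2 * real n)
     - real n * bilin K A q q / 2"

lemma L2_emp_dist_diff:
  assumes "0 < T"
  shows "L2 K A (emp_dist ch T) - L2 K A q = scaled_gap q T / real T"
proof -
  have "bilin K A (emp_dist ch T) (emp_dist ch T)
      = bilin K A (play_count ch T) (play_count ch T) / (real T)\<^sup>2"
    unfolding bilin_def emp_dist_eq_play_count
    by (simp add: sum_divide_distrib power2_eq_square mult_ac)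
  then show ?thesis
    using assms unfolding L2_eq_bilin scaled_gap_def by (simp add: field_simps power2_eq_square)
qed

lemma scaled_gap_Suc_le:
  assumes "K \<le> n" and q0: "\<forall>k<K. 0 \<le> q k" and q1: "(\<Sum>k<K. q k) = 1"
  shows "scaled_gap q (Suc n)
    \<le> scaled_gap q n + (2 * sup_norm K l1 + 5/2 + 2 * real (cnt ch n (ch (Suc n)))) / real (Suc n)"
proof -
  let ?N = "play_count ch n" and ?N' = "play_count ch (Suc n)" and ?j = "ch (Suc n)"
  define e where "e = 2 * (2 * sup_norm K l1 + 2 + 2 * real (cnt ch n ?j)) + 1"
  have "?N' = (\<lambda>i. ?N i + of_bool (i = ?j))"
    by (rule ext) (simp add: play_count_Suc)
  then have "bilin K A ?N' ?N' = bilin K A ?N ?N + 2 * (\<Sum>i<K. ?N i * A i ?j) + A ?j ?j"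
    using bilin_add_unit[OF A_sym chosen_less] by simp
  moreover have "A ?j ?j \<le> 1"
    using A_bdd chosen_less[of n] abs_le_D1 by blast
  ultimately have next_le: "bilin K A ?N' ?N' \<le> bilin K A ?N ?N + 2 * bilin K A ?N q + e"
    using chosen_column_le[OF assms] unfolding e_def by argo
  have "2 * real n * bilin K A ?N q \<le> (real n)\<^sup>2 * bilin K A q q + bilin K A ?N ?N"
    using two_mult_bilin_le[OF A_sym bilin_nonneg, of "real n" q ?N] bilin_commute[OF A_sym, of q ?N]
    by simp
  moreover have "0 < real n"
    using assms(1) K_pos by simp
  ultimately have "bilin K A ?N' ?N' / (2 * (real n + 1)) - (real n + 1) * bilin K A q q / 2
      \<le> bilin K A ?N ?N / (2 * real n) - real n * bilin K A q q / 2 + e / (2 * (real n + 1))"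
    using potential_step_arith bilin_nonneg next_le by blast
  moreover have "e / (2 * (real n + 1))
      = (2 * sup_norm K l1 + 5/2 + 2 * real (cnt ch n ?j)) / real (Suc n)"
    unfolding e_def by (simp add: field_simps)
  ultimately show ?thesis
    unfolding scaled_gap_def by (simp add: add.commute)
qed

definition lyapunov :: "(nat \<Rightarrow> real) \<Rightarrow> nat \<Rightarrow> real" where
  "lyapunov q n = scaled_gap q n - (2 * sup_norm K l1 + 5/2) * ln (real n) - 2 * recency n"

lemma lyapunov_Suc_le:
  assumes "K \<le> n" and "\<forall>k<K. 0 \<le> q k" and "(\<Sum>k<K. q k) = 1"
  shows "lyapunov q (Suc n) \<le> lyapunov q n"
proof -
  let ?S = "2 * sup_norm K l1 + 5/2"
  have n: "1 \<le> n"
    using assms(1) K_pos by simp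
  have "?S * (1 / real (Suc n)) \<le> ?S * (ln (real (Suc n)) - ln (real n))"
    using diff_div_le_ln_diff[of "real n" "real (Suc n)"] n sup_norm_nonneg[OF K_pos, of l1]
    by (intro mult_left_mono) auto
  then show ?thesis
    using scaled_gap_Suc_le[OF assms] recency_step[OF n]
    unfolding lyapunov_def by (simp add: add_divide_distrib right_diff_distrib)
qed

lemma lyapunov_mono:
  assumes "\<forall>k<K. 0 \<le> q k" and "(\<Sum>k<K. q k) = 1" and "K \<le> m" and "m \<le> n"
  shows "lyapunov q n \<le> lyapunov q m"
  using \<open>m \<le> n\<close>
proof (induction n rule: dec_induct)
  case (step n)
  then show ?case
    using lyapunov_Suc_le[OF _ assms(1,2), of n] assms(3) by simp
qed simp

lemma scaled_gap_at_K: "scaled_gap q K \<le> real K / 2"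
proof -
  have "bilin K A (play_count ch K) (play_count ch K) \<le> (real K)\<^sup>2"
    using bilin_le_sum_square[of K A "play_count ch K"] A_bdd play_count_nonneg
      sum_play_count[where K = K and ch = ch, OF chosen_less]
    by (simp add: abs_le_iff)
  then have "bilin K A (play_count ch K) (play_count ch K) / (2 * real K) \<le> real K / 2"
    using K_pos by (simp add: field_simps power2_eq_square)
  moreover have "0 \<le> real K * bilin K A q q"
    using bilin_nonneg[of q] by simp
  ultimately show ?thesis
    unfolding scaled_gap_def by simp
qed

lemma scaled_gap_le:
  assumes "\<forall>k<K. 0 \<le> q k" and "(\<Sum>k<K. q k) = 1" and "K + 1 \<le> T"
  shows "scaled_gap q T
    \<le> (5 * real K + 1) / 2 + (2 * real K + 2 * sup_norm K l1 + 4) * ln (real T)"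
proof -
  let ?S = "2 * sup_norm K l1 + 5/2"
  have "lyapunov q T \<le> lyapunov q K"
    using lyapunov_mono[OF assms(1,2)] assms(3) by simp
  then have "scaled_gap q T \<le> scaled_gap q K + 2 * recency T - 2 * recency K
      + ?S * ln (real T) - ?S * ln (real K)"
    unfolding lyapunov_def by simp
  moreover have "0 \<le> ?S * ln (real K)"
    using K_pos sup_norm_nonneg[OF K_pos, of l1] by simp
  moreover have "?S * ln (real T) \<le> (2 * sup_norm K l1 + 4) * ln (real T)"
    using assms(3) by (intro mult_right_mono) auto
  moreover have "recency T \<le> real K * ln (real T)" "- real K \<le> recency K"
    using recency_le recency_ge assms(3) by auto
  moreover have "(2 * real K + 2 * sup_norm K l1 + 4) * ln (real T)
      = 2 * (real K * ln (real T)) + (2 * sup_norm K l1 + 4) * ln (real T)"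
    by (simp add: algebra_simps)
  ultimately show ?thesis
    using scaled_gap_at_K[of q] by argo
qed

lemma excess_loss_le:
  assumes "q \<in> prob_simplex K" and "K + 1 \<le> T"
  shows "L2 K A (emp_dist ch T) - L2 K A q
    \<le> (5 * real K + 1) / (2 * real T) + (2 * real K + 2 * sup_norm K l1 + 4) * ln (real T) / real T"
proof -
  have "scaled_gap q T / real T
      \<le> ((5 * real K + 1) / 2 + (2 * real K + 2 * sup_norm K l1 + 4) * ln (real T)) / real T"
    using assms scaled_gap_le[of q T] unfolding prob_simplex_def
    by (intro divide_right_mono) auto
  then show ?thesis
    using assms(2) L2_emp_dist_diff[of T q] by (simp add: add_divide_distrib)
qed

end

lemma prob_simplex_nonempty:
  assumes "0 < K"
  shows "prob_simplex K \<noteq> {}"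
proof -
  have "(\<lambda>i. of_bool (i = 0)) \<in> prob_simplex K"
    unfolding prob_simplex_def using assms by simp
  then show ?thesis
    by blast
qed

theorem mainTheorem6:
  fixes K :: nat and A :: "nat \<Rightarrow> nat \<Rightarrow> real" and l1 :: "nat \<Rightarrow> real"
    and \<xi> :: "nat \<Rightarrow> real" and ch :: "nat \<Rightarrow> nat" and T :: nat
  assumes K_pos: "K \<ge> 1"
    and A_sym: "\<forall>i<K. \<forall>j<K. A i j = A j i"
    and A_psd: "\<forall>x :: nat \<Rightarrow> real. (\<Sum>i<K. \<Sum>j<K. x i * A i j * x j) \<ge> 0"
    and A_bdd: "\<forall>i<K. \<forall>j<K. \<bar>A i j\<bar> \<le> 1"
    and noise_bdd: "\<forall>t. \<bar>\<xi> t\<bar> \<le> 1"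
    and run: "influential_lcb_run K A l1 \<xi> ch"
    and T_ge: "T \<ge> K + 1"
  shows "L2 K A (emp_dist ch T) - (INF p\<in>prob_simplex K. L2 K A p)
           \<le> (5 * real K + 1) / (2 * real T)
             + (2 * real K + 2 * sup_norm K l1 + 4) * ln (real T) / real T"
proof -
  interpret psd_lcb_run K A l1 \<xi> ch
    using A_sym A_psd A_bdd noise_bdd run by unfold_locales auto
  let ?R = "(5 * real K + 1) / (2 * real T)
    + (2 * real K + 2 * sup_norm K l1 + 4) * ln (real T) / real T"
  have "L2 K A (emp_dist ch T) - ?R \<le> (INF p\<in>prob_simplex K. L2 K A p)"
    using prob_simplex_nonempty[OF K_pos] excess_loss_le[OF _ T_ge]
    by (intro cINF_greatest) (simp_all add: algebra_simps)
  then show ?thesis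
    by simp
qed

end
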